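(* Let $x$ be an indeterminate, let $l,m,n$ be positive integers with $l > m\geq n\geq \frac{l}{2}$, and let $c_1,c_2\in\mathbb{Q}$ be constants. For $0\le k\le m$ and $r\in\{1,2\}$ write $$U_k^{(r)}:=c_1\bigl(H_{k+n}^{(r)} - H_{k+l-n-1}^{(r)}\bigr) + c_2 \bigl(H_{k+m}^{(r)} - H_{k+l-m-1}^{(r)}\bigr).$$ Then, as an identity of rational functions in $x$ over $\mathbb{Q}$, \begin{multline*} \sum_{k=0}^{n} \frac{1}{x+k} \binom{m+k}{k} \binom{m}{k} \binom{n+k}{k} \binom{n}{k} \Biggl\{ U_k^{(1)} \cdot \Bigl[ \frac{x}{x+k} + k \bigl(H_{m+k}^{(1)} +H_{m-k}^{(1)} + H_{n+k}^{(1)} + H_{n-k}^{(1)} -4H_k^{(1)}\bigr) \Bigr] - k\, U_k^{(2)}\Biggr\} \\ +\sum_{k=n+1}^{m} \frac{(-1)^{k-n}}{x+k} \binom{m+k}{k} \binom{m}{k} \binom{n+k}{k} \Big/ \binom{k-1}{n}\; U_k^{(1)}\\ =\frac{x\, (1-x)_{n}\, (1-x)_{m}}{(x)_{n+1}\, (x)_{m+1}} \left[c_1 \sum_{s=l-n}^{n} \frac{1}{s-x} + c_2 \sum_{s=l-m}^{m} \frac{1}{s-x} \right]. \end{multline*}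
   Context: For non-negative integers $i$ and $n$, the generalized harmonic sum is $H^{(i)}_{n}:=\sum_{j=1}^{n} j^{-i}$ for $n\ge 1$, and $H^{(i)}_{0}:=0$. For $a$ and a non-negative integer $n$, $(a)_n$ denotes the rising factorial: $(a)_0:=1$ and $(a)_n:=a(a+1)\cdots(a+n-1)$ for $n>0$. An empty sum equals $0$. *)

theory Defs
  imports Complex_Main "HOL-Computational_Algebra.Polynomial" "HOL-Computational_Algebra.Fraction_Field"
begin

definition harm :: "nat \<Rightarrow> nat \<Rightarrow> rat" where
  "harm i n = (\<Sum>j=1..n. 1 / (of_nat j) ^ i)"

type_synonym ratfun = "rat poly fract"

definition RX :: ratfun where
  "RX = Fract [:0, 1:] 1"

definition RC :: "rat \<Rightarrow> ratfun" where
  "RC c = Fract [:c:] 1"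

end

theory Submission
  imports Defs "HOL-Computational_Algebra.Polynomial_Factorial"
begin

text \<open>
  Both sides are linear in U, and U_k^(r) is a combination of the sums of (k + s)^(-r) over
  the windows l - n \<le> s \<le> n and l - m \<le> s \<le> m. It therefore suffices to prove the identity
  with U_k^(r) replaced by (k + s)^(-r) for a single 1 \<le> s \<le> m. That identity is a partial
  fraction decomposition: the right-hand side is x M(x) / D(x) with D = (x)_(n+1) (x)_(m+1),
  which has double poles at -k for k \<le> n, simple poles at -k for n < k \<le> m, and
  deg (x M) < deg D, while the k-th summand on the left is the principal part at -k.
  After multiplying by D, the difference of the two numerators vanishes at each -k to the order
  of the pole there (the cofactors of D take factorial values at -k, and their logarithmic
  derivatives are harmonic numbers), so it is divisible by D and hence zero for degree reasons.
\<close>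

lemma to_fract_prod: "to_fract (prod f A) = (\<Prod>x\<in>A. to_fract (f x))"
  by (induction A rule: infinite_finite_induct) simp_all

lemma to_fract_power: "to_fract (x ^ k) = to_fract x ^ k"
  by (induction k) simp_all

lemma to_fract_of_nat [simp]: "to_fract (of_nat k) = of_nat k"
  by (induction k) simp_all

lemma RX_conv_to_fract: "RX = to_fract [:0, 1:]"
  by (simp add: RX_def to_fract_def)

lemma RC_conv_to_fract: "RC c = to_fract [:c:]"
  by (simp add: RC_def to_fract_def)

lemma RC_0 [simp]: "RC 0 = 0"
  by (simp add: RC_conv_to_fract)

lemma RC_1 [simp]: "RC 1 = 1"
  by (simp add: RC_conv_to_fract one_pCons [symmetric])

lemma RC_add [simp]: "RC (a + b) = RC a + RC b"
  by (simp add: RC_conv_to_fract to_fract_add [symmetric])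

lemma RC_minus [simp]: "RC (- a) = - RC a"
  by (simp add: RC_conv_to_fract to_fract_uminus [symmetric])

lemma RC_diff [simp]: "RC (a - b) = RC a - RC b"
  by (simp add: RC_conv_to_fract to_fract_diff [symmetric])

lemma RC_mult [simp]: "RC (a * b) = RC a * RC b"
  by (simp add: RC_conv_to_fract to_fract_mult [symmetric])

lemma RC_eq_0_iff [simp]: "RC a = 0 \<longleftrightarrow> a = 0"
  by (simp add: RC_conv_to_fract)

lemma RC_divide [simp]: "RC (a / b) = RC a / RC b"
proof (cases "b = 0")
  case False
  then have "RC (a / b) * RC b = RC a"
    by (simp flip: RC_mult)
  with False show ?thesis
    by (simp add: field_simps)
qed simp

lemma RC_power [simp]: "RC (a ^ k) = RC a ^ k"
  by (induction k) simp_all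

lemma RC_of_nat [simp]: "RC (of_nat k) = of_nat k"
  by (induction k) simp_all

lemma RX_plus_of_nat_neq_0: "RX + of_nat k \<noteq> 0"
proof
  assume "RX + of_nat k = 0"
  then have "to_fract [:of_nat k, 1 :: rat:] = 0"
    by (simp add: RX_conv_to_fract of_nat_poly flip: to_fract_of_nat to_fract_add)
  then show False
    by simp
qed

lemma of_nat_minus_RX_neq_0: "of_nat k - RX \<noteq> 0"
proof
  assume "of_nat k - RX = 0"
  then have "to_fract [:of_nat k, -1 :: rat:] = 0"
    by (simp add: RX_conv_to_fract of_nat_poly flip: to_fract_of_nat to_fract_diff)
  then show False
    by simp
qed

lemma poly_pderiv_prod:
  fixes f :: "'b \<Rightarrow> 'a::field poly"
  assumes "finite S" and "\<And>i. i \<in> S \<Longrightarrow> poly (f i) x \<noteq> 0"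
  shows "poly (pderiv (prod f S)) x
           = poly (prod f S) x * (\<Sum>i\<in>S. poly (pderiv (f i)) x / poly (f i) x)"
  using assms
proof (induction S rule: finite_induct)
  case (insert a S)
  then have "poly (f a) x \<noteq> 0"
    by simp
  with insert show ?case
    by (simp add: pderiv_mult poly_prod field_simps sum_distrib_left)
qed simp

lemma linear_power2_dvd_if_double_root:
  fixes p :: "'a::field poly"
  assumes "poly p a = 0" and "poly (pderiv p) a = 0"
  shows "[:-a, 1:] ^ 2 dvd p"
proof -
  obtain q where q: "p = [:-a, 1:] * q"
    using assms(1) poly_eq_0_iff_dvd by blast
  have "poly (pderiv p) a = poly q a"
    unfolding q by (simp add: pderiv_mult pderiv_pCons del: mult_pCons_left)
  with assms(2) have "poly q a = 0"
    by simp
  then obtain r where "q = [:-a, 1:] * r"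
    using poly_eq_0_iff_dvd by blast
  then have "p = [:-a, 1:] ^ 2 * r"
    by (simp only: q power2_eq_square mult.assoc)
  then show ?thesis
    by (rule dvdI)
qed

lemma linear_power_dvd_cancel:
  fixes a b :: "'a::idom"
  assumes "a \<noteq> b" and "[:-a, 1:] ^ k dvd [:-b, 1:] ^ l * q"
  shows "[:-a, 1:] ^ k dvd q"
proof (cases "q = 0")
  case False
  then have nz: "[:-b, 1:] ^ l * q \<noteq> 0"
    by simp
  have "order a ([:-b, 1:] ^ l) = 0"
    using assms(1) by (intro order_0I) (simp add: poly_power)
  then have "order a ([:-b, 1:] ^ l * q) = order a q"
    using order_mult[OF nz] by simp
  with assms(2) nz show ?thesis
    by (simp add: order_divides)
qed simp

lemma prod_linear_powers_dvd:
  fixes c :: "'b \<Rightarrow> 'a::idom"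
  assumes "finite A" and "inj_on c A" and "\<And>i. i \<in> A \<Longrightarrow> [:- c i, 1:] ^ e i dvd q"
  shows "(\<Prod>i\<in>A. [:- c i, 1:] ^ e i) dvd q"
  using assms
proof (induction A arbitrary: q rule: finite_induct)
  case (insert a A)
  obtain q' where q': "q = [:- c a, 1:] ^ e a * q'"
    using insert.prems(2) by (auto elim: dvdE)
  have "(\<Prod>i\<in>A. [:- c i, 1:] ^ e i) dvd q'"
  proof (rule insert.IH)
    show "inj_on c A"
      using insert.prems(1) by simp
    fix i assume "i \<in> A"
    with insert.hyps(2) insert.prems(1) have "c i \<noteq> c a"
      by (auto simp: inj_on_def)
    moreover have "[:- c i, 1:] ^ e i dvd [:- c a, 1:] ^ e a * q'"
      using insert.prems(2) \<open>i \<in> A\<close> q' by simp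
    ultimately show "[:- c i, 1:] ^ e i dvd q'"
      by (rule linear_power_dvd_cancel)
  qed
  then show ?case
    unfolding q' using insert.hyps by (simp add: mult_dvd_mono)
qed simp

lemma poly_eq_if_dvd_diff:
  fixes p q :: "'a::field poly"
  assumes "D dvd p - q" and "degree p < degree D" and "degree q < degree D"
  shows "p = q"
proof (rule ccontr)
  assume "p \<noteq> q"
  then have "degree D \<le> degree (p - q)"
    using assms(1) by (intro dvd_imp_degree_le) simp_all
  also have "\<dots> \<le> max (degree p) (degree q)"
    by (rule degree_diff_le_max)
  finally show False
    using assms(2,3) by simp
qed

lemma prod_of_nat_diff_remove:
  assumes "j \<le> a"
  shows "(\<Prod>i\<in>{0..a} - {j}. of_nat i - of_nat j :: 'a::{comm_ring_1,semiring_char_0})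
           = (-1) ^ j * fact j * fact (a - j)"
proof -
  have split: "{0..a} - {j} = {0..<j} \<union> {j<..a}"
    using assms by auto
  have below: "(\<Prod>i\<in>{0..<j}. of_nat i - of_nat j :: 'a) = (-1) ^ j * fact j"
  proof -
    have "(\<Prod>i\<in>{0..<j}. of_nat j - of_nat i :: 'a) = (\<Prod>k\<in>{1..j}. of_nat k)"
      by (rule prod.reindex_bij_witness[of _ "\<lambda>k. j - k" "\<lambda>i. j - i"]) (auto simp: of_nat_diff)
    moreover have "(\<Prod>i\<in>{0..<j}. of_nat i - of_nat j :: 'a)
                   = (\<Prod>i\<in>{0..<j}. (-1) * (of_nat j - of_nat i))"
      by simp
    ultimately show ?thesis
      by (simp only: prod.distrib) (simp add: fact_prod)
  qed
  have above: "(\<Prod>i\<in>{j<..a}. of_nat i - of_nat j :: 'a) = fact (a - j)"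
  proof -
    have "(\<Prod>i\<in>{j<..a}. of_nat i - of_nat j :: 'a) = (\<Prod>k\<in>{1..a - j}. of_nat k)"
      by (rule prod.reindex_bij_witness[of _ "\<lambda>k. k + j" "\<lambda>i. i - j"]) (auto simp: of_nat_diff)
    then show ?thesis
      by (simp add: fact_prod)
  qed
  show ?thesis
    unfolding split by (subst prod.union_disjoint) (auto simp: below above)
qed

lemma prod_of_nat_diff_atMost:
  assumes "a < j"
  shows "(\<Prod>i\<in>{0..a}. of_nat j - of_nat i :: 'a::{comm_ring_1,semiring_char_0}) * fact (j - a - 1)
           = fact j"
  using assms
proof (induction a)
  case 0
  then show ?case
    by (simp add: fact_reduce[of j])
next
  case (Suc a)
  have "fact (j - Suc a) = (of_nat j - of_nat (Suc a)) * (fact (j - Suc a - 1) :: 'a)"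
    using Suc.prems by (simp add: fact_reduce[of "j - Suc a"] of_nat_diff)
  then have "(\<Prod>i\<in>{0..Suc a}. of_nat j - of_nat i :: 'a) * fact (j - Suc a - 1)
             = (\<Prod>i\<in>{0..a}. of_nat j - of_nat i) * fact (j - a - 1)"
    by (simp add: prod.atLeast0_atMost_Suc mult.assoc)
  with Suc show ?case
    by simp
qed

lemma prod_of_nat_add:
  "(\<Prod>i\<in>{1..a}. of_nat i + of_nat j :: 'a::field_char_0) = fact (a + j) / fact j"
proof (induction a)
  case (Suc a)
  have "(\<Prod>i\<in>{1..Suc a}. of_nat i + of_nat j :: 'a)
        = (of_nat (Suc a) + of_nat j) * (\<Prod>i\<in>{1..a}. of_nat i + of_nat j)"
    by (simp add: atLeastAtMostSuc_conv)
  also have "\<dots> = of_nat (Suc (a + j)) * fact (a + j) / fact j"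
    using Suc.IH by simp
  finally show ?case
    by simp
qed simp

lemma harm_diff_eq_sum:
  assumes "a \<le> b"
  shows "harm r (k + b) - harm r (k + a) = (\<Sum>s\<in>{a<..b}. 1 / of_nat (k + s) ^ r)"
  using assms
proof (induction b rule: dec_induct)
  case (step b)
  have "harm r (k + Suc b) = harm r (k + b) + 1 / of_nat (k + Suc b) ^ r"
    by (simp add: harm_def atLeastAtMostSuc_conv add.commute)
  moreover have "{a<..Suc b} = insert (Suc b) {a<..b}"
    using step by auto
  ultimately show ?case
    using step by (simp add: algebra_simps)
qed simp

lemma harm_diff_eq_sum_window:
  assumes "a < l" and "l \<le> 2 * a + 1"
  shows "harm r (k + a) - harm r (k + l - a - 1) = (\<Sum>s=l-a..a. 1 / of_nat (k + s) ^ r)"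
proof -
  have "k + l - a - 1 = k + (l - a - 1)" and "{l - a - 1<..a} = {l - a..a}"
    using assms by auto
  then show ?thesis
    using harm_diff_eq_sum[of "l - a - 1" a r k] assms by simp
qed

lemma sum_inverse_of_nat_add:
  "(\<Sum>i\<in>{1..a}. 1 / (of_nat i + of_nat j :: rat)) = harm 1 (a + j) - harm 1 j"
proof -
  have "{0<..a} = {1..a}"
    by auto
  then show ?thesis
    using harm_diff_eq_sum[of 0 a 1 j] by (simp add: add.commute)
qed

lemma sum_inverse_of_nat_diff_remove:
  assumes "j \<le> a"
  shows "(\<Sum>i\<in>{0..a} - {j}. 1 / (of_nat i - of_nat j :: rat)) = harm 1 (a - j) - harm 1 j"
proof -
  have split: "{0..a} - {j} = {0..<j} \<union> {j<..a}"
    using assms by auto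
  have below: "(\<Sum>i\<in>{0..<j}. 1 / (of_nat i - of_nat j :: rat)) = - harm 1 j"
  proof -
    have "(\<Sum>i\<in>{0..<j}. 1 / (of_nat i - of_nat j :: rat)) = (\<Sum>k\<in>{1..j}. - (1 / of_nat k))"
      by (rule sum.reindex_bij_witness[of _ "\<lambda>k. j - k" "\<lambda>i. j - i"])
         (auto simp: of_nat_diff divide_simps)
    then show ?thesis
      by (simp add: harm_def sum_negf)
  qed
  have above: "(\<Sum>i\<in>{j<..a}. 1 / (of_nat i - of_nat j :: rat)) = harm 1 (a - j)"
  proof -
    have "(\<Sum>i\<in>{j<..a}. 1 / (of_nat i - of_nat j :: rat)) = (\<Sum>k\<in>{1..a - j}. 1 / of_nat k)"
      by (rule sum.reindex_bij_witness[of _ "\<lambda>k. k + j" "\<lambda>i. i - j"]) (auto simp: of_nat_diff)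
    then show ?thesis
      by (simp add: harm_def)
  qed
  show ?thesis
    unfolding split by (subst sum.union_disjoint) (auto simp: below above)
qed

definition xplus :: "nat \<Rightarrow> rat poly" where
  "xplus i = [:of_nat i, 1:]"

lemma poly_xplus [simp]: "poly (xplus i) x = x + of_nat i"
  by (simp add: xplus_def)

lemma xplus_neq_0 [simp]: "xplus i \<noteq> 0"
  by (simp add: xplus_def)

lemma degree_xplus [simp]: "degree (xplus i) = 1"
  by (simp add: xplus_def)

lemma pderiv_xplus [simp]: "pderiv (xplus i) = 1"
  by (simp add: xplus_def pderiv_pCons)

lemma xplus_conv_linear: "xplus i = [:- (- of_nat i), 1:]"
  by (simp add: xplus_def)

lemma to_fract_xplus: "to_fract (xplus i) = RX + of_nat i"
  by (simp add: xplus_def RX_conv_to_fract of_nat_poly flip: to_fract_of_nat to_fract_add)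

definition pole_order :: "nat \<Rightarrow> nat \<Rightarrow> nat" where
  "pole_order n i = (if i \<le> n then 2 else 1)"

definition denom_poly :: "nat \<Rightarrow> nat \<Rightarrow> rat poly" where
  "denom_poly m n = (\<Prod>i\<in>{0..n}. xplus i) * (\<Prod>i\<in>{0..m}. xplus i)"

definition cofactor_poly :: "nat \<Rightarrow> nat \<Rightarrow> nat \<Rightarrow> rat poly" where
  "cofactor_poly m n j = (\<Prod>i\<in>{0..n} - {j}. xplus i) * (\<Prod>i\<in>{0..m} - {j}. xplus i)"

lemma prod_pole_order:
  fixes f :: "nat \<Rightarrow> 'a::comm_monoid_mult"
  assumes "n \<le> m"
  shows "(\<Prod>i\<in>{0..m}. f i ^ pole_order n i) = (\<Prod>i\<in>{0..n}. f i) * (\<Prod>i\<in>{0..m}. f i)"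
  using assms
proof (induction m rule: dec_induct)
  case base
  show ?case
    by (simp add: pole_order_def power2_eq_square prod.distrib)
next
  case (step m)
  then show ?case
    by (simp add: prod.atLeast0_atMost_Suc pole_order_def mult_ac)
qed

lemma denom_poly_eq_prod_pole_powers:
  "n \<le> m \<Longrightarrow> denom_poly m n = (\<Prod>j\<in>{0..m}. xplus j ^ pole_order n j)"
  by (simp add: denom_poly_def prod_pole_order)

lemma denom_poly_eq_cofactor:
  assumes "j \<le> m"
  shows "denom_poly m n = xplus j ^ pole_order n j * cofactor_poly m n j"
proof (cases "j \<le> n")
  case True
  then show ?thesis
    using assms unfolding denom_poly_def cofactor_poly_def pole_order_def
    by (simp add: prod.remove[of "{0..n}" j] prod.remove[of "{0..m}" j] power2_eq_square mult_ac)
next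
  case False
  then have "{0..n} - {j} = {0..n}"
    by auto
  with False show ?thesis
    using assms unfolding denom_poly_def cofactor_poly_def pole_order_def
    by (simp add: prod.remove[of "{0..m}" j] mult_ac)
qed

lemma xplus_power_dvd_cofactor_poly:
  assumes "j \<le> m" and "k \<noteq> j"
  shows "xplus j ^ pole_order n j dvd cofactor_poly m n k"
proof -
  have in_m: "xplus j dvd (\<Prod>i\<in>{0..m} - {k}. xplus i)"
    using assms by (intro dvd_prodI) auto
  show ?thesis
  proof (cases "j \<le> n")
    case True
    then have "xplus j dvd (\<Prod>i\<in>{0..n} - {k}. xplus i)"
      using assms by (intro dvd_prodI) auto
    with True in_m show ?thesis
      unfolding cofactor_poly_def pole_order_def by (simp add: power2_eq_square mult_dvd_mono)
  next
    case False
    with in_m show ?thesis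
      unfolding cofactor_poly_def pole_order_def by simp
  qed
qed

lemma denom_poly_dvd:
  assumes "n \<le> m" and "\<And>j. j \<le> m \<Longrightarrow> xplus j ^ pole_order n j dvd q"
  shows "denom_poly m n dvd q"
proof -
  have "(\<Prod>j\<in>{0..m}. [:- (- of_nat j), 1:] ^ pole_order n j) dvd q"
    using assms(2) by (intro prod_linear_powers_dvd) (auto simp: inj_on_def xplus_conv_linear)
  then show ?thesis
    by (simp add: denom_poly_eq_prod_pole_powers[OF assms(1)] xplus_conv_linear)
qed

lemma degree_denom_poly: "degree (denom_poly m n) = n + m + 2"
  by (simp add: denom_poly_def degree_mult_eq degree_prod_sum_eq)

lemma degree_cofactor_poly:
  assumes "j \<le> m"
  shows "degree (cofactor_poly m n j) + pole_order n j = n + m + 2"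
proof -
  have "cofactor_poly m n j \<noteq> 0"
    by (simp add: cofactor_poly_def)
  then show ?thesis
    using denom_poly_eq_cofactor[OF assms, of n] degree_denom_poly[of m n]
    by (simp add: degree_mult_eq degree_power_eq)
qed

lemma to_fract_denom_poly:
  "to_fract (denom_poly m n) = pochhammer RX (n + 1) * pochhammer RX (m + 1)"
  by (simp add: denom_poly_def to_fract_prod to_fract_xplus pochhammer_Suc_prod)

lemma poly_prod_xplus_remove:
  assumes "j \<le> a"
  shows "poly (\<Prod>i\<in>{0..a} - {j}. xplus i) (- of_nat j) = (-1) ^ j * fact j * fact (a - j)"
  using prod_of_nat_diff_remove[OF assms] by (simp add: poly_prod)

lemma poly_pderiv_prod_xplus_remove:
  assumes "j \<le> a"
  shows "poly (pderiv (\<Prod>i\<in>{0..a} - {j}. xplus i)) (- of_nat j)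
           = poly (\<Prod>i\<in>{0..a} - {j}. xplus i) (- of_nat j) * (harm 1 (a - j) - harm 1 j)"
proof -
  have "poly (pderiv (\<Prod>i\<in>{0..a} - {j}. xplus i)) (- of_nat j)
        = poly (\<Prod>i\<in>{0..a} - {j}. xplus i) (- of_nat j)
          * (\<Sum>i\<in>{0..a} - {j}. 1 / (of_nat i - of_nat j))"
    by (subst poly_pderiv_prod) auto
  then show ?thesis
    by (simp only: sum_inverse_of_nat_diff_remove[OF assms])
qed

lemma poly_cofactor_poly_le:
  assumes "j \<le> n" and "n \<le> m"
  shows "poly (cofactor_poly m n j) (- of_nat j) = fact j ^ 2 * fact (n - j) * fact (m - j)"
proof -
  have "poly (cofactor_poly m n j) (- of_nat j)
        = ((-1) ^ j * (-1) ^ j) * (fact j * fact j) * fact (n - j) * fact (m - j)"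
    using assms by (simp add: cofactor_poly_def poly_prod_xplus_remove mult_ac)
  then show ?thesis
    by (simp add: power2_eq_square flip: power_add)
qed

lemma poly_cofactor_poly_gt:
  assumes "n < j" and "j \<le> m"
  shows "poly (cofactor_poly m n j) (- of_nat j) * fact (j - n - 1)
           = (-1) ^ (n + 1 + j) * fact j ^ 2 * fact (m - j)"
proof -
  have "{0..n} - {j} = {0..n}"
    using assms by auto
  moreover have "poly (\<Prod>i\<in>{0..n}. xplus i) (- of_nat j) = (\<Prod>i\<in>{0..n}. (-1) * (of_nat j - of_nat i))"
    by (simp add: poly_prod)
  moreover have "\<dots> = (-1) ^ (n + 1) * (\<Prod>i\<in>{0..n}. of_nat j - of_nat i)"
    by (subst prod.distrib) simp
  ultimately show ?thesis
    using assms prod_of_nat_diff_atMost[of n j, where 'a = rat]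
    by (simp add: cofactor_poly_def poly_prod_xplus_remove power2_eq_square power_add mult_ac)
qed

lemma poly_pderiv_cofactor_poly:
  assumes "j \<le> n" and "n \<le> m"
  shows "poly (pderiv (cofactor_poly m n j)) (- of_nat j)
           = poly (cofactor_poly m n j) (- of_nat j)
             * (harm 1 (n - j) + harm 1 (m - j) - 2 * harm 1 j)"
  using assms
  by (simp add: cofactor_poly_def pderiv_mult poly_pderiv_prod_xplus_remove algebra_simps)

text \<open>\<open>[:0, 1:] * numer_core m n s\<close> is \<open>x (1 - x)\<^sub>n (1 - x)\<^sub>m / (s - x)\<close>.\<close>

definition numer_core :: "nat \<Rightarrow> nat \<Rightarrow> nat \<Rightarrow> rat poly" where
  "numer_core m n s = (\<Prod>i\<in>{1..n}. [:of_nat i, -1:]) * (\<Prod>i\<in>{1..m} - {s}. [:of_nat i, -1:])"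

definition numer_poly :: "nat \<Rightarrow> nat \<Rightarrow> nat \<Rightarrow> rat poly" where
  "numer_poly m n s = [:0, 1:] * numer_core m n s"

lemma poly_numer_core:
  assumes "s \<in> {1..m}"
  shows "poly (numer_core m n s) (- of_nat j)
           = fact (n + j) / fact j * (fact (m + j) / fact j) / (of_nat j + of_nat s)"
proof -
  have remove: "(\<Prod>i\<in>{1..m}. of_nat i + of_nat j :: rat)
                = (of_nat s + of_nat j) * (\<Prod>i\<in>{1..m} - {s}. of_nat i + of_nat j)"
    using assms by (subst prod.remove[of _ s]) auto
  have "(of_nat j + of_nat s) * poly (numer_core m n s) (- of_nat j)
        = (\<Prod>i\<in>{1..n}. of_nat i + of_nat j)
          * ((of_nat s + of_nat j) * (\<Prod>i\<in>{1..m} - {s}. of_nat i + of_nat j))"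
    by (simp add: numer_core_def poly_prod add.commute mult_ac)
  also have "\<dots> = (\<Prod>i\<in>{1..n}. of_nat i + of_nat j) * (\<Prod>i\<in>{1..m}. of_nat i + of_nat j)"
    by (simp only: remove)
  finally have "(of_nat j + of_nat s) * poly (numer_core m n s) (- of_nat j)
                = fact (n + j) / fact j * (fact (m + j) / fact j)"
    by (simp only: prod_of_nat_add add.commute)
  moreover have "of_nat j + of_nat s \<noteq> (0 :: rat)"
    using assms by (simp flip: of_nat_add)
  ultimately show ?thesis
    by (metis nonzero_mult_div_cancel_left)
qed

lemma poly_pderiv_numer_core:
  assumes "s \<in> {1..m}"
  shows "poly (pderiv (numer_core m n s)) (- of_nat j)
           = poly (numer_core m n s) (- of_nat j)
             * (1 / (of_nat j + of_nat s) + 2 * harm 1 j - harm 1 (n + j) - harm 1 (m + j))"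
proof -
  have logderiv: "poly (pderiv (\<Prod>i\<in>A. [:of_nat i, -1 :: rat:])) (- of_nat j)
        = - poly (\<Prod>i\<in>A. [:of_nat i, -1:]) (- of_nat j) * (\<Sum>i\<in>A. 1 / (of_nat i + of_nat j))"
    if "finite A" "0 \<notin> A" for A
    using that by (subst poly_pderiv_prod)
      (auto simp: pderiv_pCons sum_negf simp flip: of_nat_add intro: gr0I)
  have "(\<Sum>i\<in>{1..m}. 1 / (of_nat i + of_nat j :: rat))
        = 1 / (of_nat j + of_nat s) + (\<Sum>i\<in>{1..m} - {s}. 1 / (of_nat i + of_nat j))"
    using assms by (subst sum.remove[of _ s]) (auto simp: add.commute)
  then have sum_m: "(\<Sum>i\<in>{1..m} - {s}. 1 / (of_nat i + of_nat j :: rat))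
                    = harm 1 (m + j) - harm 1 j - 1 / (of_nat j + of_nat s)"
    using sum_inverse_of_nat_add[where a = m and j = j] by linarith
  have deriv_n: "poly (pderiv (\<Prod>i\<in>{1..n}. [:of_nat i, -1:])) (- of_nat j)
                 = - poly (\<Prod>i\<in>{1..n}. [:of_nat i, -1:]) (- of_nat j) * (harm 1 (n + j) - harm 1 j)"
    using logderiv[of "{1..n}"] sum_inverse_of_nat_add[where a = n and j = j] by simp
  have deriv_m: "poly (pderiv (\<Prod>i\<in>{1..m} - {s}. [:of_nat i, -1:])) (- of_nat j)
                 = - poly (\<Prod>i\<in>{1..m} - {s}. [:of_nat i, -1:]) (- of_nat j)
                   * (harm 1 (m + j) - harm 1 j - 1 / (of_nat j + of_nat s))"
    using logderiv[of "{1..m} - {s}"] sum_m by simp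
  show ?thesis
    unfolding numer_core_def pderiv_mult poly_add poly_mult deriv_n deriv_m
    by (simp add: algebra_simps)
qed

lemma degree_numer_poly:
  assumes "s \<in> {1..m}"
  shows "degree (numer_poly m n s) \<le> n + m"
proof -
  have "degree (numer_core m n s) \<le> card {1..n} + card ({1..m} - {s})"
    unfolding numer_core_def
    by (rule order.trans[OF degree_mult_le add_mono]; rule order.trans[OF degree_prod_sum_le])
       simp_all
  moreover have "degree (numer_poly m n s) \<le> 1 + degree (numer_core m n s)"
    unfolding numer_poly_def by (rule order.trans[OF degree_mult_le]) simp
  moreover have "card ({1..m} - {s}) + 1 = m"
    using assms by simp
  ultimately show ?thesis
    by simp
qed

lemma to_fract_numer_poly:
  assumes "s \<in> {1..m}"
  shows "to_fract (numer_poly m n s)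
           = RX * pochhammer (1 - RX) n * pochhammer (1 - RX) m / (of_nat s - RX)"
proof -
  have pochhammer_conv: "pochhammer (1 - RX) k = (\<Prod>i\<in>{1..k}. of_nat i - RX)" for k
    by (induction k) (simp_all add: pochhammer_Suc atLeastAtMostSuc_conv algebra_simps)
  have to_fract_factor: "to_fract [:of_nat i, -1 :: rat:] = of_nat i - RX" for i
    by (simp add: RX_conv_to_fract of_nat_poly flip: to_fract_of_nat to_fract_diff)
  have prod_m: "(\<Prod>i\<in>{1..m}. of_nat i - RX) = (of_nat s - RX) * (\<Prod>i\<in>{1..m} - {s}. of_nat i - RX)"
    using assms by (subst prod.remove[of _ s]) auto
  have "to_fract (numer_poly m n s)
        = RX * ((\<Prod>i\<in>{1..n}. of_nat i - RX) * (\<Prod>i\<in>{1..m} - {s}. of_nat i - RX))"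
    unfolding numer_poly_def numer_core_def to_fract_mult to_fract_prod to_fract_factor
      RX_conv_to_fract[symmetric] ..
  then show ?thesis
    unfolding pochhammer_conv prod_m using of_nat_minus_RX_neq_0[of s] by simp
qed

definition binom_prod :: "nat \<Rightarrow> nat \<Rightarrow> nat \<Rightarrow> rat" where
  "binom_prod m n k = of_nat ((m + k) choose k) * of_nat (m choose k)
                      * of_nat ((n + k) choose k) * of_nat (n choose k)"

definition binom_quot :: "nat \<Rightarrow> nat \<Rightarrow> nat \<Rightarrow> rat" where
  "binom_quot m n k = of_nat ((m + k) choose k) * of_nat (m choose k)
                      * of_nat ((n + k) choose k) / of_nat ((k - 1) choose n)"

lemma binom_prod_mult_cofactor:
  assumes "j \<le> n" and "n \<le> m"
  shows "binom_prod m n j * poly (cofactor_poly m n j) (- of_nat j)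
           = fact (n + j) / fact j * (fact (m + j) / fact j)"
proof -
  have binomials:
    "of_nat ((m + j) choose j) = (fact (m + j) / (fact j * fact m) :: rat)"
    "of_nat (m choose j) = (fact m / (fact j * fact (m - j)) :: rat)"
    "of_nat ((n + j) choose j) = (fact (n + j) / (fact j * fact n) :: rat)"
    "of_nat (n choose j) = (fact n / (fact j * fact (n - j)) :: rat)"
    using assms by (subst binomial_fact; simp)+
  show ?thesis
    unfolding binom_prod_def poly_cofactor_poly_le[OF assms] binomials
    by (simp add: field_simps power2_eq_square)
qed

lemma binom_quot_mult_cofactor:
  assumes "n < j" and "j \<le> m"
  shows "(-1) ^ (j - n) * binom_quot m n j * poly (cofactor_poly m n j) (- of_nat j)
           = - of_nat j * (fact (n + j) / fact j * (fact (m + j) / fact j))"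
proof -
  obtain d where j: "j = n + 1 + d"
    using assms(1) by (metis add.commute less_iff_Suc_add plus_1_eq_Suc add_Suc_right)
  have binomials:
    "of_nat ((m + j) choose j) = (fact (m + j) / (fact j * fact m) :: rat)"
    "of_nat (m choose j) = (fact m / (fact j * fact (m - j)) :: rat)"
    "of_nat ((n + j) choose j) = (fact (n + j) / (fact j * fact n) :: rat)"
    "of_nat ((j - 1) choose n) = (fact (n + d) / (fact n * fact d) :: rat)"
    using assms by (subst binomial_fact; simp add: j)+
  have fact_j: "fact j = (of_nat j * fact (n + d) :: rat)"
    by (simp add: j)
  have signs: "(-1 :: rat) ^ (j - n) * (-1) ^ (n + 1 + j) = -1"
    by (simp add: j power_add)
  have "poly (cofactor_poly m n j) (- of_nat j)
        = (-1) ^ (n + 1 + j) * fact j ^ 2 * fact (m - j) / fact d"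
    using poly_cofactor_poly_gt[OF assms] by (simp add: j field_simps)
  then have "(-1) ^ (j - n) * binom_quot m n j * poly (cofactor_poly m n j) (- of_nat j)
             = - (binom_quot m n j * fact j ^ 2 * fact (m - j) / fact d)"
    using signs by (simp add: mult_ac)
  also have "\<dots> = - of_nat j * (fact (n + j) / fact j * (fact (m + j) / fact j))"
    unfolding binom_quot_def binomials
    using assms by (simp add: fact_j field_simps power2_eq_square)
  finally show ?thesis .
qed

definition harm_comb :: "nat \<Rightarrow> nat \<Rightarrow> nat \<Rightarrow> rat" where
  "harm_comb m n k =
     harm 1 (m + k) + harm 1 (m - k) + harm 1 (n + k) + harm 1 (n - k) - 4 * harm 1 k"

text \<open>
  For \<open>U\<^sub>k\<^sup>(\<^sup>r\<^sup>) = (k + s)\<^sup>-\<^sup>r\<close>, the \<open>k\<close>-th summand of the left-hand side is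
  \<open>pf_lead / (x + k)\<^sup>2 + pf_next / (x + k)\<close> for \<open>k \<le> n\<close> and \<open>pf_lead / (x + k)\<close> for \<open>k > n\<close>.
\<close>

definition pf_lead :: "nat \<Rightarrow> nat \<Rightarrow> nat \<Rightarrow> nat \<Rightarrow> rat" where
  "pf_lead m n s k = (if k \<le> n then - of_nat k * binom_prod m n k / of_nat (k + s)
                      else (-1) ^ (k - n) * binom_quot m n k / of_nat (k + s))"

definition pf_next :: "nat \<Rightarrow> nat \<Rightarrow> nat \<Rightarrow> nat \<Rightarrow> rat" where
  "pf_next m n s k = (if k \<le> n then binom_prod m n k / of_nat (k + s)
                        * (1 + of_nat k * harm_comb m n k - of_nat k / of_nat (k + s))
                      else 0)"

definition pf_numer :: "nat \<Rightarrow> nat \<Rightarrow> nat \<Rightarrow> nat \<Rightarrow> rat poly" where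
  "pf_numer m n s k = [:pf_lead m n s k:] + smult (pf_next m n s k) (xplus k)"

definition pf_sum :: "nat \<Rightarrow> nat \<Rightarrow> nat \<Rightarrow> rat poly" where
  "pf_sum m n s = (\<Sum>k\<in>{0..m}. pf_numer m n s k * cofactor_poly m n k)"

lemma degree_pf_numer: "degree (pf_numer m n s k) < pole_order n k"
proof (cases "k \<le> n")
  case True
  have "degree (pf_numer m n s k) \<le> 1"
    unfolding pf_numer_def by (intro degree_add_le order.trans[OF degree_smult_le]) simp_all
  with True show ?thesis
    by (simp add: pole_order_def)
qed (simp add: pf_numer_def pf_next_def pole_order_def)

lemma pf_lead_mult_cofactor:
  assumes "s \<in> {1..m}" and "n \<le> m" and "j \<le> m"
  shows "pf_lead m n s j * poly (cofactor_poly m n j) (- of_nat j)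
           = - of_nat j * poly (numer_core m n s) (- of_nat j)"
proof -
  let ?D = "poly (cofactor_poly m n j) (- of_nat j)"
  let ?W = "fact (n + j) / fact j * (fact (m + j) / fact j) :: rat"
  have js: "of_nat j + of_nat s \<noteq> (0 :: rat)"
    using assms(1) by (simp flip: of_nat_add)
  have "pf_lead m n s j * ?D = - of_nat j * ?W / (of_nat j + of_nat s)"
  proof (cases "j \<le> n")
    case True
    then have "pf_lead m n s j * ?D = - of_nat j * (binom_prod m n j * ?D) / (of_nat j + of_nat s)"
      using js by (simp add: pf_lead_def field_simps)
    then show ?thesis
      by (simp only: binom_prod_mult_cofactor[OF True assms(2)])
  next
    case False
    then have "pf_lead m n s j * ?D
               = ((-1) ^ (j - n) * binom_quot m n j * ?D) / (of_nat j + of_nat s)"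
      using js by (simp add: pf_lead_def field_simps)
    then show ?thesis
      using False assms(3) by (simp only: binom_quot_mult_cofactor not_le)
  qed
  also have "\<dots> = - of_nat j * poly (numer_core m n s) (- of_nat j)"
    by (simp add: poly_numer_core[OF assms(1)])
  finally show ?thesis .
qed

lemma pf_next_mult_cofactor:
  assumes "s \<in> {1..m}" and "j \<le> n" and "n \<le> m"
  shows "pf_next m n s j * poly (cofactor_poly m n j) (- of_nat j)
           = poly (numer_core m n s) (- of_nat j)
             * (1 + of_nat j * harm_comb m n j - of_nat j / (of_nat j + of_nat s))"
proof -
  let ?D = "poly (cofactor_poly m n j) (- of_nat j)"
  let ?K = "1 + of_nat j * harm_comb m n j - of_nat j / (of_nat j + of_nat s)"
  have js: "of_nat j + of_nat s \<noteq> (0 :: rat)"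
    using assms(1) by (simp flip: of_nat_add)
  have "pf_next m n s j * ?D = binom_prod m n j * ?D / (of_nat j + of_nat s) * ?K"
    using assms(2) js by (simp add: pf_next_def field_simps)
  also have "\<dots> = fact (n + j) / fact j * (fact (m + j) / fact j) / (of_nat j + of_nat s) * ?K"
    by (simp only: binom_prod_mult_cofactor[OF assms(2,3)])
  also have "\<dots> = poly (numer_core m n s) (- of_nat j) * ?K"
    by (simp only: poly_numer_core[OF assms(1)])
  finally show ?thesis .
qed

lemma xplus_power_dvd_pf_residual:
  assumes "s \<in> {1..m}" and "n \<le> m" and "j \<le> m"
  shows "xplus j ^ pole_order n j dvd pf_numer m n s j * cofactor_poly m n j - numer_poly m n s"
proof -
  let ?x = "- of_nat j :: rat"
  let ?r = "pf_numer m n s j * cofactor_poly m n j - numer_poly m n s"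
  let ?D = "poly (cofactor_poly m n j) ?x"
  let ?M = "poly (numer_core m n s) ?x"
  have lead: "pf_lead m n s j * ?D = - of_nat j * ?M"
    by (rule pf_lead_mult_cofactor[OF assms])
  have root: "poly ?r ?x = 0"
    using lead by (simp add: pf_numer_def numer_poly_def)
  show ?thesis
  proof (cases "j \<le> n")
    case True
    have "poly (pderiv ?r) ?x
          = pf_next m n s j * ?D + pf_lead m n s j * poly (pderiv (cofactor_poly m n j)) ?x
            - (?M - of_nat j * poly (pderiv (numer_core m n s)) ?x)"
      by (simp add: pf_numer_def numer_poly_def pderiv_mult pderiv_add pderiv_diff pderiv_smult
          pderiv_pCons algebra_simps)
    also have "\<dots> = ?M * (1 + of_nat j * harm_comb m n j - of_nat j / (of_nat j + of_nat s))
                    - of_nat j * ?M * (harm 1 (n - j) + harm 1 (m - j) - 2 * harm 1 j)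
                    - (?M - of_nat j * ?M * (1 / (of_nat j + of_nat s) + 2 * harm 1 j
                                             - harm 1 (n + j) - harm 1 (m + j)))"
      unfolding poly_pderiv_cofactor_poly[OF True assms(2)] poly_pderiv_numer_core[OF assms(1)]
        pf_next_mult_cofactor[OF assms(1) True assms(2)] mult.assoc[symmetric] lead
      by simp
    also have "\<dots> = 0"
      by (simp add: harm_comb_def algebra_simps)
    finally have "[:- ?x, 1:] ^ 2 dvd ?r"
      using root by (intro linear_power2_dvd_if_double_root)
    with True show ?thesis
      by (simp add: pole_order_def xplus_def)
  next
    case False
    have "[:- ?x, 1:] dvd ?r"
      using root by (simp only: poly_eq_0_iff_dvd)
    with False show ?thesis
      by (simp add: pole_order_def xplus_def)
  qed
qed

lemma denom_poly_dvd_pf_sum_diff: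
  assumes "s \<in> {1..m}" and "n \<le> m"
  shows "denom_poly m n dvd pf_sum m n s - numer_poly m n s"
proof (rule denom_poly_dvd[OF assms(2)])
  fix j assume j: "j \<le> m"
  have split: "pf_sum m n s - numer_poly m n s
        = (pf_numer m n s j * cofactor_poly m n j - numer_poly m n s)
          + (\<Sum>k\<in>{0..m} - {j}. pf_numer m n s k * cofactor_poly m n k)"
    using j by (simp add: pf_sum_def sum.remove[of _ j])
  have "xplus j ^ pole_order n j dvd (\<Sum>k\<in>{0..m} - {j}. pf_numer m n s k * cofactor_poly m n k)"
    using j by (intro dvd_sum dvd_mult xplus_power_dvd_cofactor_poly) auto
  then show "xplus j ^ pole_order n j dvd pf_sum m n s - numer_poly m n s"
    unfolding split by (rule dvd_add[OF xplus_power_dvd_pf_residual[OF assms j]])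
qed

lemma degree_pf_sum: "degree (pf_sum m n s) < n + m + 2"
  unfolding pf_sum_def
proof (rule degree_sum_less)
  fix k assume "k \<in> {0..m}"
  then have "degree (cofactor_poly m n k) + pole_order n k = n + m + 2"
    by (intro degree_cofactor_poly) simp
  then show "degree (pf_numer m n s k * cofactor_poly m n k) < n + m + 2"
    using degree_pf_numer[of m n s k] degree_mult_le[of "pf_numer m n s k" "cofactor_poly m n k"]
    by linarith
qed simp

lemma pf_sum_eq_numer_poly:
  assumes "s \<in> {1..m}" and "n \<le> m"
  shows "pf_sum m n s = numer_poly m n s"
proof (rule poly_eq_if_dvd_diff)
  show "denom_poly m n dvd pf_sum m n s - numer_poly m n s"
    by (rule denom_poly_dvd_pf_sum_diff[OF assms])
  show "degree (pf_sum m n s) < degree (denom_poly m n)"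
    using degree_pf_sum[of m n s] by (simp add: degree_denom_poly)
  show "degree (numer_poly m n s) < degree (denom_poly m n)"
    using degree_numer_poly[OF assms(1), of n] by (simp add: degree_denom_poly)
qed

lemma to_fract_pf_numer:
  "to_fract (pf_numer m n s k) = RC (pf_lead m n s k) + RC (pf_next m n s k) * (RX + of_nat k)"
proof -
  have "pf_numer m n s k = [:pf_lead m n s k:] + [:pf_next m n s k:] * xplus k"
    by (simp add: pf_numer_def)
  then show ?thesis
    by (simp only: to_fract_add to_fract_mult RC_conv_to_fract to_fract_xplus)
qed

lemma partial_fraction_split:
  fixes X K :: "'a::field"
  assumes "X + K \<noteq> 0"
  shows "1 / (X + K) * A * (r * (X / (X + K) + K * E) - K * r ^ 2)
           = (- K * A * r + A * r * (1 + K * E - K * r) * (X + K)) / (X + K) ^ 2"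
  using assms by (simp add: field_simps power2_eq_square)

lemma lhs_term_le:
  assumes "k \<le> n"
  shows "1 / (RX + of_nat k)
           * of_nat ((m + k) choose k) * of_nat (m choose k)
           * of_nat ((n + k) choose k) * of_nat (n choose k)
           * (RC (1 / of_nat (k + s) ^ 1) * (RX / (RX + of_nat k)
                + of_nat k * RC (harm 1 (m + k) + harm 1 (m - k) + harm 1 (n + k)
                                 + harm 1 (n - k) - 4 * harm 1 k))
              - of_nat k * RC (1 / of_nat (k + s) ^ 2))
         = to_fract (pf_numer m n s k) / (RX + of_nat k) ^ 2"
proof -
  let ?A = "of_nat ((m + k) choose k) * of_nat (m choose k)
            * of_nat ((n + k) choose k) * of_nat (n choose k) :: ratfun"
  let ?r = "RC (1 / of_nat (k + s))"
  let ?E = "RC (harm_comb m n k)"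
  have lead: "RC (pf_lead m n s k) = - of_nat k * ?A * ?r"
    using assms by (simp add: pf_lead_def binom_prod_def)
  have sub: "RC (pf_next m n s k) = ?A * ?r * (1 + of_nat k * ?E - of_nat k * ?r)"
    using assms by (simp add: pf_next_def binom_prod_def)
  have "RC (1 / of_nat (k + s) ^ 2) = ?r ^ 2"
    by (simp add: power_one_over)
  then have "1 / (RX + of_nat k) * ?A
           * (RC (1 / of_nat (k + s) ^ 1) * (RX / (RX + of_nat k)
                + of_nat k * RC (harm 1 (m + k) + harm 1 (m - k) + harm 1 (n + k)
                                 + harm 1 (n - k) - 4 * harm 1 k))
              - of_nat k * RC (1 / of_nat (k + s) ^ 2))
        = 1 / (RX + of_nat k) * ?A
          * (?r * (RX / (RX + of_nat k) + of_nat k * ?E) - of_nat k * ?r ^ 2)"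
    by (simp only: power_one_right harm_comb_def)
  also have "\<dots> = (RC (pf_lead m n s k) + RC (pf_next m n s k) * (RX + of_nat k))
                    / (RX + of_nat k) ^ 2"
    unfolding lead sub by (rule partial_fraction_split[OF RX_plus_of_nat_neq_0])
  finally show ?thesis
    by (simp only: to_fract_pf_numer mult.assoc)
qed

lemma lhs_term_gt:
  assumes "n < k"
  shows "(-1) ^ (k - n) / (RX + of_nat k)
           * of_nat ((m + k) choose k) * of_nat (m choose k) * of_nat ((n + k) choose k)
           / of_nat ((k - 1) choose n) * RC (1 / of_nat (k + s) ^ 1)
         = to_fract (pf_numer m n s k) / (RX + of_nat k)"
  using assms by (simp add: to_fract_pf_numer pf_lead_def pf_next_def binom_quot_def mult_ac)

definition lhs_form :: "nat \<Rightarrow> nat \<Rightarrow> (nat \<Rightarrow> nat \<Rightarrow> rat) \<Rightarrow> ratfun" where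
  "lhs_form m n u =
     (\<Sum>k=0..n. 1 / (RX + of_nat k)
        * of_nat ((m + k) choose k) * of_nat (m choose k)
        * of_nat ((n + k) choose k) * of_nat (n choose k)
        * (RC (u 1 k) * (RX / (RX + of_nat k)
             + of_nat k * RC (harm 1 (m + k) + harm 1 (m - k) + harm 1 (n + k)
                              + harm 1 (n - k) - 4 * harm 1 k))
           - of_nat k * RC (u 2 k)))
   + (\<Sum>k=n+1..m. (-1) ^ (k - n) / (RX + of_nat k)
        * of_nat ((m + k) choose k) * of_nat (m choose k) * of_nat ((n + k) choose k)
        / of_nat ((k - 1) choose n) * RC (u 1 k))"

definition rhs_factor :: "nat \<Rightarrow> nat \<Rightarrow> ratfun" where
  "rhs_factor m n = RX * pochhammer (1 - RX) n * pochhammer (1 - RX) m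
                    / (pochhammer RX (n + 1) * pochhammer RX (m + 1))"

lemma lhs_form_linear:
  obtains \<alpha> \<beta> \<gamma> where "\<And>u. lhs_form m n u =
      (\<Sum>k=0..n. \<alpha> k * RC (u 1 k) + \<beta> k * RC (u 2 k)) + (\<Sum>k=n+1..m. \<gamma> k * RC (u 1 k))"
proof -
  have split: "c * (a * Q - K * b) = c * Q * a + - (c * K) * b" for a b c K Q :: ratfun
    by (simp add: algebra_simps)
  show ?thesis
    by (rule that) (unfold lhs_form_def split, rule refl)
qed

lemma lhs_form_add: "lhs_form m n (\<lambda>r k. u r k + v r k) = lhs_form m n u + lhs_form m n v"
proof -
  obtain \<alpha> \<beta> \<gamma> where "\<And>u. lhs_form m n u =
      (\<Sum>k=0..n. \<alpha> k * RC (u 1 k) + \<beta> k * RC (u 2 k)) + (\<Sum>k=n+1..m. \<gamma> k * RC (u 1 k))"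
    using lhs_form_linear[of m n] by blast
  then show ?thesis
    by (simp add: sum.distrib algebra_simps)
qed

lemma lhs_form_scale: "lhs_form m n (\<lambda>r k. c * u r k) = RC c * lhs_form m n u"
proof -
  obtain \<alpha> \<beta> \<gamma> where "\<And>u. lhs_form m n u =
      (\<Sum>k=0..n. \<alpha> k * RC (u 1 k) + \<beta> k * RC (u 2 k)) + (\<Sum>k=n+1..m. \<gamma> k * RC (u 1 k))"
    using lhs_form_linear[of m n] by blast
  then show ?thesis
    by (simp add: sum_distrib_left algebra_simps)
qed

lemma lhs_form_sum:
  assumes "finite S"
  shows "lhs_form m n (\<lambda>r k. \<Sum>s\<in>S. g s r k) = (\<Sum>s\<in>S. lhs_form m n (g s))"
  using assms
proof (induction S rule: finite_induct)
  case empty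
  show ?case
    using lhs_form_scale[of m n 0 "\<lambda>r k. 0"] by simp
next
  case (insert a S)
  then show ?case
    using lhs_form_add[of m n "g a" "\<lambda>r k. \<Sum>s\<in>S. g s r k"] by simp
qed

lemma lhs_form_inverse_shift:
  assumes "s \<in> {1..m}" and "n \<le> m"
  shows "lhs_form m n (\<lambda>r k. 1 / of_nat (k + s) ^ r) = rhs_factor m n / (of_nat s - RX)"
proof -
  define f where "f k = to_fract (pf_numer m n s k) / to_fract (xplus k ^ pole_order n k)" for k
  have low: "\<And>k. k \<in> {0..n} \<Longrightarrow> f k = to_fract (pf_numer m n s k) / (RX + of_nat k) ^ 2"
    by (simp add: f_def pole_order_def to_fract_power to_fract_xplus)
  have high: "\<And>k. k \<in> {n+1..m} \<Longrightarrow> f k = to_fract (pf_numer m n s k) / (RX + of_nat k)"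
    by (simp add: f_def pole_order_def to_fract_xplus)
  have "lhs_form m n (\<lambda>r k. 1 / of_nat (k + s) ^ r) = (\<Sum>k=0..n. f k) + (\<Sum>k=n+1..m. f k)"
    unfolding lhs_form_def
    by (intro arg_cong2[where f = "(+)"] sum.cong refl trans[OF lhs_term_le] trans[OF lhs_term_gt])
       (auto simp: low high)
  also have "\<dots> = (\<Sum>k=0..m. f k)"
    using assms(2) by (subst sum.union_disjoint[symmetric]) (auto intro: sum.cong)
  also have "\<dots> = (\<Sum>k=0..m. to_fract (pf_numer m n s k * cofactor_poly m n k)
                                / to_fract (denom_poly m n))"
    by (intro sum.cong) (simp_all add: f_def denom_poly_eq_cofactor cofactor_poly_def)
  also have "\<dots> = to_fract (numer_poly m n s) / to_fract (denom_poly m n)"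
    by (simp add: pf_sum_eq_numer_poly[OF assms, symmetric] pf_sum_def sum_divide_distrib)
  also have "\<dots> = rhs_factor m n / (of_nat s - RX)"
    by (simp add: rhs_factor_def to_fract_denom_poly to_fract_numer_poly[OF assms(1)] mult_ac)
  finally show ?thesis .
qed

theorem theorem2p2:
  fixes l m n :: nat and c1 c2 :: rat
  assumes "0 < n" and "m < l" and "n \<le> m" and "l \<le> 2 * n"
  defines "U \<equiv> (\<lambda>r k. c1 * (harm r (k + n) - harm r (k + l - n - 1))
                       + c2 * (harm r (k + m) - harm r (k + l - m - 1)))"
  shows
    "(\<Sum>k=0..n. 1 / (RX + of_nat k)
        * of_nat ((m + k) choose k) * of_nat (m choose k)
        * of_nat ((n + k) choose k) * of_nat (n choose k)
        * ( RC (U 1 k) * ( RX / (RX + of_nat k)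
              + of_nat k * RC (harm 1 (m + k) + harm 1 (m - k) + harm 1 (n + k)
                               + harm 1 (n - k) - 4 * harm 1 k))
            - of_nat k * RC (U 2 k)))
     + (\<Sum>k=n+1..m. (-1) ^ (k - n) / (RX + of_nat k)
        * of_nat ((m + k) choose k) * of_nat (m choose k) * of_nat ((n + k) choose k)
        / of_nat ((k - 1) choose n) * RC (U 1 k))
     = RX * pochhammer (1 - RX) n * pochhammer (1 - RX) m
         / (pochhammer RX (n + 1) * pochhammer RX (m + 1))
       * ( RC c1 * (\<Sum>s=l-n..n. 1 / (of_nat s - RX))
         + RC c2 * (\<Sum>s=l-m..m. 1 / (of_nat s - RX)))"
proof -
  define g where "g s r k = (1 :: rat) / of_nat (k + s) ^ r" for s r k :: nat
  have "U = (\<lambda>r k. c1 * (\<Sum>s\<in>{l-n..n}. g s r k) + c2 * (\<Sum>s\<in>{l-m..m}. g s r k))"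
    unfolding U_def g_def using assms harm_diff_eq_sum_window[of n l] harm_diff_eq_sum_window[of m l]
    by simp
  then have "lhs_form m n U = RC c1 * (\<Sum>s\<in>{l-n..n}. lhs_form m n (g s))
                             + RC c2 * (\<Sum>s\<in>{l-m..m}. lhs_form m n (g s))"
    by (simp add: lhs_form_add lhs_form_scale lhs_form_sum)
  also have "\<dots> = rhs_factor m n * (RC c1 * (\<Sum>s=l-n..n. 1 / (of_nat s - RX))
                                    + RC c2 * (\<Sum>s=l-m..m. 1 / (of_nat s - RX)))"
  proof -
    have "(\<Sum>s\<in>{l-a..a}. lhs_form m n (g s)) = rhs_factor m n * (\<Sum>s=l-a..a. 1 / (of_nat s - RX))"
      if "a \<in> {n, m}" for a
      unfolding sum_distrib_left g_def using that assms
      by (intro sum.cong refl, subst lhs_form_inverse_shift) auto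
    from this[of n] this[of m] show ?thesis
      by (simp add: algebra_simps)
  qed
  finally show ?thesis
    unfolding lhs_form_def rhs_factor_def .
qed

end
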